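(* Let $m\ge 4$ be an integer. If $H$ is a finite simple connected graph of order greater than $m$, then the Cartesian product $K_m \,\square\, H$ is not well-dominated.
   Context: A graph is well-dominated if every minimal (with respect to inclusion) dominating set is a minimum dominating set. The Cartesian product $G\,\square\, H$ has vertex set $V(G)\times V(H)$, with $(g_1,h_1)$ adjacent to $(g_2,h_2)$ iff either ($g_1=g_2$ and $h_1h_2\in E(H)$) or ($h_1=h_2$ and $g_1g_2\in E(G)$). *)

theory Defs
  imports Main
begin

definition simple_graph :: "'a set \<Rightarrow> ('a \<Rightarrow> 'a \<Rightarrow> bool) \<Rightarrow> bool" where
  "simple_graph V E \<longleftrightarrow> finite V \<and> (\<forall>x y. E x y \<longrightarrow> x \<in> V \<and> y \<in> V)
     \<and> (\<forall>x y. E x y \<longrightarrow> E y x) \<and> (\<forall>x. \<not> E x x)"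

definition connected_graph :: "'a set \<Rightarrow> ('a \<Rightarrow> 'a \<Rightarrow> bool) \<Rightarrow> bool" where
  "connected_graph V E \<longleftrightarrow> V \<noteq> {} \<and> (\<forall>x\<in>V. \<forall>y\<in>V. E\<^sup>*\<^sup>* x y)"

definition dominating_set :: "'a set \<Rightarrow> ('a \<Rightarrow> 'a \<Rightarrow> bool) \<Rightarrow> 'a set \<Rightarrow> bool" where
  "dominating_set V E D \<longleftrightarrow> D \<subseteq> V \<and> (\<forall>v\<in>V. v \<in> D \<or> (\<exists>u\<in>D. E v u))"

definition minimal_dominating_set :: "'a set \<Rightarrow> ('a \<Rightarrow> 'a \<Rightarrow> bool) \<Rightarrow> 'a set \<Rightarrow> bool" where
  "minimal_dominating_set V E D \<longleftrightarrow> dominating_set V E D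
     \<and> (\<forall>D'. D' \<subset> D \<longrightarrow> \<not> dominating_set V E D')"

definition minimum_dominating_set :: "'a set \<Rightarrow> ('a \<Rightarrow> 'a \<Rightarrow> bool) \<Rightarrow> 'a set \<Rightarrow> bool" where
  "minimum_dominating_set V E D \<longleftrightarrow> dominating_set V E D
     \<and> (\<forall>D'. dominating_set V E D' \<longrightarrow> card D \<le> card D')"

definition well_dominated :: "'a set \<Rightarrow> ('a \<Rightarrow> 'a \<Rightarrow> bool) \<Rightarrow> bool" where
  "well_dominated V E \<longleftrightarrow>
     (\<forall>D. minimal_dominating_set V E D \<longrightarrow> minimum_dominating_set V E D)"

definition cart_prod_edges ::
  "('a \<Rightarrow> 'a \<Rightarrow> bool) \<Rightarrow> ('b \<Rightarrow> 'b \<Rightarrow> bool) \<Rightarrow> 'a \<times> 'b \<Rightarrow> 'a \<times> 'b \<Rightarrow> bool" where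
  "cart_prod_edges EG EH = (\<lambda>(g1, h1) (g2, h2).
     (g1 = g2 \<and> EH h1 h2) \<or> (h1 = h2 \<and> EG g1 g2))"

definition complete_vertices :: "nat \<Rightarrow> nat set" where
  "complete_vertices m = {0..<m}"

definition complete_edges :: "nat \<Rightarrow> nat \<Rightarrow> nat \<Rightarrow> bool" where
  "complete_edges m i j \<longleftrightarrow> i < m \<and> j < m \<and> i \<noteq> j"

end

theory Submission
  imports Defs
begin

text \<open>Suppose \<open>K\<^sub>m \<box> H\<close> is well-dominated. The layer \<open>{0} \<times> V(H)\<close> is a minimal dominating
  set, so every minimal dominating set has exactly \<open>|V(H)|\<close> elements and no dominating set has
  fewer. The basic tool is a hub set: if the vertices of X have a common neighbour c and, for a
  set Q of nonzero columns, every x \<in> X reaches each column of Q through its own neighbours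
  outside \<open>X \<union> {c}\<close>, then \<open>m - |Q| + |V(H)| - |X| - 1\<close> vertices dominate, so \<open>|Q| + |X| < m\<close>.
  This confines all degrees of H to \<open>{m - 2, m - 1}\<close> and forbids two non-adjacent vertices of
  degree \<open>m - 1\<close> with a common neighbour; as \<open>|V(H)| > m\<close>, some u has degree \<open>m - 2\<close>. Such a u
  has a non-adjacent b with \<open>N(u) \<subseteq> N(b)\<close>, since otherwise an explicit minimal dominating set
  has \<open>|V(H)| + 1\<close> elements. Both possible degrees of b then lead to a contradiction, with
  connectivity and \<open>|V(H)| > m\<close> when \<open>N(b) = N(u)\<close>, and with further hub sets otherwise.\<close>

lemma ex_common_image_superset:
  assumes "finite Q" "finite A" "finite B" "card Q \<le> card A" "card Q \<le> card B"
  shows "\<exists>f. Q \<subseteq> f ` A \<and> Q \<subseteq> f ` B"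
  using assms
proof (induction Q arbitrary: A B rule: finite_induct)
  case empty
  then show ?case by blast
next
  case (insert q Q)
  have "A \<noteq> {}" "B \<noteq> {}" using insert.hyps insert.prems by auto
  \<comment> \<open>Use a common element of A and B if there is one, so that the two updates below do not interfere.\<close>
  then obtain a b where ab: "a \<in> A" "b \<in> B" "a \<notin> B - {b}" "b \<notin> A - {a}"
    by (cases "A \<inter> B = {}") blast+
  have "card Q \<le> card (A - {a})" "card Q \<le> card (B - {b})"
    using insert.hyps insert.prems ab by (simp_all add: card_Diff_singleton)
  then obtain f where f: "Q \<subseteq> f ` (A - {a})" "Q \<subseteq> f ` (B - {b})"
    using insert.IH insert.prems by blast
  let ?g = "f(a := q, b := q)"
  have "?g ` (A - {a}) = f ` (A - {a})" "?g ` (B - {b}) = f ` (B - {b})"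
    by (intro image_cong refl; use ab in auto)+
  with f have "Q \<subseteq> ?g ` (A - {a})" "Q \<subseteq> ?g ` (B - {b})"
    by simp_all
  then have "Q \<subseteq> ?g ` A" "Q \<subseteq> ?g ` B"
    by blast+
  moreover have "q \<in> ?g ` A" "q \<in> ?g ` B"
    using ab by (metis fun_upd_same fun_upd_apply imageI)+
  ultimately show ?case
    by blast
qed

lemma private_neighbour_mem:
  assumes "dominating_set V E S" "S \<subseteq> D" "v \<in> V" "\<forall>y\<in>D. v = y \<or> E v y \<longrightarrow> y = x"
  shows "x \<in> S"
  using assms unfolding dominating_set_def by blast

lemma minimal_dominating_setI:
  assumes "dominating_set V E D" "\<forall>x\<in>D. \<exists>v\<in>V. \<forall>y\<in>D. v = y \<or> E v y \<longrightarrow> y = x"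
  shows "minimal_dominating_set V E D"
  unfolding minimal_dominating_set_def
proof (intro conjI allI impI notI)
  fix D' assume sub: "D' \<subset> D" and dom: "dominating_set V E D'"
  then obtain x where x: "x \<in> D" "x \<notin> D'" by blast
  then obtain v where "v \<in> V" "\<forall>y\<in>D. v = y \<or> E v y \<longrightarrow> y = x"
    using assms(2) by blast
  with dom sub have "x \<in> D'" by (blast intro: private_neighbour_mem)
  with x show False by blast
qed (fact assms(1))

lemma dominating_set_contains_minimal:
  assumes "finite D" "dominating_set V E D"
  obtains S where "S \<subseteq> D" "minimal_dominating_set V E S"
proof -
  obtain S where S: "S \<subseteq> D" "dominating_set V E S"
    and least: "\<And>S'. S' \<subseteq> D \<Longrightarrow> dominating_set V E S' \<Longrightarrow> card S \<le> card S'"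
    using ex_has_least_nat[of "\<lambda>S. S \<subseteq> D \<and> dominating_set V E S" D card] assms by blast
  have "minimal_dominating_set V E S"
    unfolding minimal_dominating_set_def
  proof (intro conjI allI impI notI)
    fix D' assume "D' \<subset> S" "dominating_set V E D'"
    moreover have "card D' < card S"
      using \<open>D' \<subset> S\<close> S(1) assms(1) by (meson finite_subset psubset_card_mono)
    ultimately show False using least[of D'] S(1) by fastforce
  qed (fact S(2))
  with S(1) show thesis by (rule that)
qed

lemma connected_graph_subset_if_closed:
  assumes "connected_graph V E" "s \<in> S" "s \<in> V" "\<forall>v\<in>S. \<forall>y. E v y \<longrightarrow> y \<in> S"
  shows "V \<subseteq> S"
proof
  fix y assume "y \<in> V"
  with assms(1,3) have "E\<^sup>*\<^sup>* s y" by (simp add: connected_graph_def)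
  then show "y \<in> S"
    by (induction rule: rtranclp_induct) (use assms(2,4) in blast)+
qed

locale Km_product =
  fixes m :: nat and V :: "'b set" and E :: "'b \<Rightarrow> 'b \<Rightarrow> bool"
  assumes simple: "simple_graph V E"
begin

abbreviation PV :: "(nat \<times> 'b) set" where
  "PV \<equiv> complete_vertices m \<times> V"

abbreviation PE :: "nat \<times> 'b \<Rightarrow> nat \<times> 'b \<Rightarrow> bool" where
  "PE \<equiv> cart_prod_edges (complete_edges m) E"

definition N :: "'b \<Rightarrow> 'b set" where
  "N v = {w. E v w}"

lemma finite_V: "finite V"
  using simple by (simp add: simple_graph_def)

lemma E_in_V: "E x y \<Longrightarrow> x \<in> V \<and> y \<in> V"
  using simple by (simp add: simple_graph_def)

lemma E_sym: "E x y \<Longrightarrow> E y x"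
  using simple by (simp add: simple_graph_def)

lemma E_commute: "E x y \<longleftrightarrow> E y x"
  using E_sym by blast

lemma E_irrefl [simp]: "\<not> E x x"
  using simple by (simp add: simple_graph_def)

lemma mem_N [simp]: "w \<in> N v \<longleftrightarrow> E v w"
  by (simp add: N_def)

lemma N_subset_V: "N v \<subseteq> V"
  using E_in_V by auto

lemma finite_N [simp]: "finite (N v)"
  using N_subset_V finite_V by (rule finite_subset)

lemma mem_complete_vertices [simp]: "j \<in> complete_vertices m \<longleftrightarrow> j < m"
  by (simp add: complete_vertices_def)

lemma PE_iff [simp]:
  "PE (i, h) (j, g) \<longleftrightarrow> (i = j \<and> E h g) \<or> (h = g \<and> i < m \<and> j < m \<and> i \<noteq> j)"
  by (auto simp: cart_prod_edges_def complete_edges_def)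

lemma minimal_dominating_layer:
  assumes "2 \<le> m"
  shows "minimal_dominating_set PV PE ({0} \<times> V)"
proof (rule minimal_dominating_setI)
  show "dominating_set PV PE ({0} \<times> V)"
    using assms by (auto simp: dominating_set_def)
  show "\<forall>x\<in>{0::nat} \<times> V. \<exists>v\<in>PV. \<forall>y\<in>{0} \<times> V. v = y \<or> PE v y \<longrightarrow> y = x"
  proof
    fix x :: "nat \<times> 'b" assume "x \<in> {0} \<times> V"
    then obtain h where "x = (0, h)" "h \<in> V" by blast
    moreover have "(1, h) \<in> PV" using assms \<open>h \<in> V\<close> by simp
    ultimately show "\<exists>v\<in>PV. \<forall>y\<in>{0} \<times> V. v = y \<or> PE v y \<longrightarrow> y = x"
      by (intro bexI[of _ "(1, h)"]) auto
  qed
qed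

lemma dominating_row_and_layer:
  assumes "0 < m" "a \<in> V"
  shows "dominating_set PV PE (({..<m} \<times> {a}) \<union> ({0} \<times> (V - insert a (N a))))"
    (is "dominating_set PV PE ?D")
  unfolding dominating_set_def
proof (intro conjI ballI)
  show "?D \<subseteq> PV"
    using assms by auto
next
  fix v assume "v \<in> PV"
  then obtain j h where v: "v = (j, h)" "j < m" "h \<in> V" by auto
  consider "h = a" | "E h a" | "h \<in> V - insert a (N a)"
    using v E_commute by auto
  then show "v \<in> ?D \<or> (\<exists>u\<in>?D. PE v u)"
  proof cases
    case 1
    then show ?thesis using v by simp
  next
    case 2
    then have "(j, a) \<in> ?D" "PE v (j, a)" using v by auto
    then show ?thesis by blast
  next
    case 3
    then have "(0, h) \<in> ?D" "v = (0, h) \<or> PE v (0, h)" using v by auto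
    then show ?thesis by blast
  qed
qed

text \<open>Row c is kept in every column outside Q and each other vertex h outside X in column
  \<open>\<rho> h\<close>; a vertex (j, x) with x \<in> X and j \<in> Q is then dominated by (j, p) for a neighbour
  p of x with \<open>\<rho> p = j\<close>.\<close>

definition hub_set :: "nat set \<Rightarrow> 'b \<Rightarrow> 'b set \<Rightarrow> ('b \<Rightarrow> nat) \<Rightarrow> (nat \<times> 'b) set" where
  "hub_set Q c X \<rho> = (({..<m} - Q) \<times> {c}) \<union> (\<lambda>h. (\<rho> h, h)) ` (V - X - {c})"

lemma dominating_hub_set:
  assumes "c \<in> V" "Q \<subseteq> {1..<m}" "\<And>h. \<rho> h < m"
    and hub: "\<forall>x\<in>X. E x c \<and> Q \<subseteq> \<rho> ` (N x - X - {c})"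
  shows "dominating_set PV PE (hub_set Q c X \<rho>)"
  unfolding dominating_set_def
proof (intro conjI ballI)
  show "hub_set Q c X \<rho> \<subseteq> PV"
    using assms(1,3) by (auto simp: hub_set_def)
next
  fix v assume "v \<in> PV"
  then obtain j h where v: "v = (j, h)" "j < m" "h \<in> V" by auto
  consider "h \<in> X" "j \<notin> Q" | "h \<in> X" "j \<in> Q" | "h = c" | "h \<notin> X" "h \<noteq> c" by blast
  then show "v \<in> hub_set Q c X \<rho> \<or> (\<exists>u\<in>hub_set Q c X \<rho>. PE v u)"
  proof cases
    case 1
    with v hub have "(j, c) \<in> hub_set Q c X \<rho>" "PE v (j, c)" by (auto simp: hub_set_def)
    then show ?thesis by blast
  next
    case 2
    with hub obtain p where "p \<in> N h - X - {c}" "\<rho> p = j" by blast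
    moreover from this have "p \<in> V" using N_subset_V by blast
    ultimately have "(j, p) \<in> hub_set Q c X \<rho>" "PE v (j, p)"
      using v by (auto simp: hub_set_def)
    then show ?thesis by blast
  next
    case 3
    with v assms(2) have "(0, c) \<in> hub_set Q c X \<rho>" "v = (0, c) \<or> PE v (0, c)"
      by (auto simp: hub_set_def)
    then show ?thesis by blast
  next
    case 4
    with v assms(3) have "(\<rho> h, h) \<in> hub_set Q c X \<rho>" "v = (\<rho> h, h) \<or> PE v (\<rho> h, h)"
      by (auto simp: hub_set_def)
    then show ?thesis by blast
  qed
qed

lemma card_hub_set:
  assumes "X \<subseteq> V" "c \<in> V" "c \<notin> X" "Q \<subseteq> {..<m}"
  shows "card (hub_set Q c X \<rho>) = (m - card Q) + (card V - card X - 1)"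
proof -
  have "card (({..<m} - Q) \<times> {c}) = m - card Q"
    using assms(4) by (simp add: card_Diff_subset finite_subset card_cartesian_product)
  moreover have "card ((\<lambda>h. (\<rho> h, h)) ` (V - X - {c})) = card V - card X - 1"
    using assms(1-3) finite_V
    by (simp add: card_image inj_on_def card_Diff_subset finite_subset)
  ultimately show ?thesis
    unfolding hub_set_def using finite_V by (subst card_Un_disjoint) auto
qed

definition dominates :: "'b \<Rightarrow> 'b \<Rightarrow> bool" where
  "dominates b u \<longleftrightarrow> b \<in> V \<and> b \<noteq> u \<and> \<not> E u b \<and> N u \<subseteq> N b"

lemma minimal_dominating_hub_set_if_undominated:
  assumes "2 \<le> m" "E u w" and g: "bij_betw g (N u - {w}) {3..<m}"
    and undominated: "\<And>b. \<not> dominates b u"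
  defines "\<rho> \<equiv> \<lambda>h. if h \<in> N u - {w} then g h else 0"
  shows "minimal_dominating_set PV PE (hub_set {3..<m} w {u} \<rho>)"
proof (rule minimal_dominating_setI)
  let ?A = "N u - {w}" and ?D = "hub_set {3..<m} w {u} \<rho>"
  have g_range: "h \<in> ?A \<Longrightarrow> g h \<in> {3..<m}" for h
    using g by (auto simp: bij_betw_def)
  have g_inj: "h \<in> ?A \<Longrightarrow> h' \<in> ?A \<Longrightarrow> g h = g h' \<Longrightarrow> h = h'" for h h'
    using g by (auto simp: bij_betw_def inj_on_def)
  have "u \<in> V" "w \<in> V" "u \<noteq> w"
    using assms(2) E_in_V by auto
  show "dominating_set PV PE ?D"
  proof (rule dominating_hub_set)
    show "\<rho> h < m" for h
      using g_range assms(1) by (auto simp: \<rho>_def)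
    have "{3..<m} = \<rho> ` ?A"
      using g by (auto simp: bij_betw_def \<rho>_def)
    then show "\<forall>x\<in>{u}. E x w \<and> {3..<m} \<subseteq> \<rho> ` (N x - {u} - {w})"
      using assms(2) by auto
  qed (use \<open>w \<in> V\<close> in auto)
  have private_row: "\<exists>v\<in>PV. \<forall>y\<in>?D. v = y \<or> PE v y \<longrightarrow> y = (j, w)"
    if "j < m" "j \<notin> {3..<m}" for j
    using that \<open>u \<in> V\<close> \<open>u \<noteq> w\<close> g_range
    by (intro bexI[of _ "(j, u)"]) (auto simp: hub_set_def \<rho>_def)
  have private_A: "\<exists>v\<in>PV. \<forall>y\<in>?D. v = y \<or> PE v y \<longrightarrow> y = (\<rho> h, h)" if "h \<in> ?A" for h
    using that \<open>u \<in> V\<close> \<open>u \<noteq> w\<close> g_range g_inj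
    by (intro bexI[of _ "(g h, u)"]) (auto simp: hub_set_def \<rho>_def)
  have private_other: "\<exists>v\<in>PV. \<forall>y\<in>?D. v = y \<or> PE v y \<longrightarrow> y = (\<rho> h, h)"
    if h: "h \<in> V" "h \<noteq> u" "h \<noteq> w" "h \<notin> ?A" for h
  proof -
    have "\<not> E u h" "\<rho> h = 0"
      using h by (auto simp: \<rho>_def)
    with undominated[of h] h have "\<not> N u \<subseteq> N h"
      by (simp add: dominates_def)
    then obtain w' where w': "E u w'" "\<not> E h w'"
      unfolding subset_iff mem_N by blast
    show ?thesis
    proof (cases "w' = w")
      case True
      have "\<rho> h' \<noteq> 1" for h'
        using g_range[of h'] by (auto simp: \<rho>_def)
      then have "(1, h) \<noteq> y \<and> \<not> PE (1, h) y" if "y \<in> ?D" "y \<noteq> (\<rho> h, h)" for y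
        using that True h w' by (fastforce simp: hub_set_def)
      then show ?thesis
        using h assms(1) by (intro bexI[of _ "(1, h)"]) auto
    next
      case False
      with w' have "w' \<in> ?A" by simp
      have "h' = w'" if "\<rho> h' = g w'" for h'
        using that \<open>w' \<in> ?A\<close> g_range g_inj by (fastforce simp: \<rho>_def split: if_splits)
      then show ?thesis
        using h \<open>\<rho> h = 0\<close> w' g_range[OF \<open>w' \<in> ?A\<close>]
        by (intro bexI[of _ "(g w', h)"]) (fastforce simp: hub_set_def)+
    qed
  qed
  show "\<forall>x\<in>?D. \<exists>v\<in>PV. \<forall>y\<in>?D. v = y \<or> PE v y \<longrightarrow> y = x"
  proof
    fix x assume "x \<in> ?D"
    then consider j where "x = (j, w)" "j < m" "j \<notin> {3..<m}"
      | h where "x = (\<rho> h, h)" "h \<in> V" "h \<noteq> u" "h \<noteq> w"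
      by (auto simp: hub_set_def)
    then show "\<exists>v\<in>PV. \<forall>y\<in>?D. v = y \<or> PE v y \<longrightarrow> y = x"
      by cases (use private_row private_A private_other in blast)+
  qed
qed

end

locale well_dominated_Km_product = Km_product +
  assumes m_ge_4: "4 \<le> m" and connected: "connected_graph V E"
    and card_V_gt: "m < card V" and well_dom: "well_dominated PV PE"
begin

lemma minimum_dominating_layer: "minimum_dominating_set PV PE ({0} \<times> V)"
  using well_dom minimal_dominating_layer m_ge_4 by (simp add: well_dominated_def)

lemma card_V_le_dominating: "dominating_set PV PE D \<Longrightarrow> card V \<le> card D"
  using minimum_dominating_layer
  by (simp add: minimum_dominating_set_def card_cartesian_product_singleton)

lemma card_minimal_dominating_le:
  assumes "minimal_dominating_set PV PE S"
  shows "card S \<le> card V"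
proof -
  have "card S \<le> card ({0::nat} \<times> V)"
    using assms well_dom minimum_dominating_layer
    unfolding well_dominated_def minimum_dominating_set_def by blast
  then show ?thesis by (simp add: card_cartesian_product_singleton)
qed

lemma N_nonempty:
  assumes "v \<in> V"
  shows "N v \<noteq> {}"
proof
  assume "N v = {}"
  then have "V \<subseteq> {v}"
    using assms by (intro connected_graph_subset_if_closed[OF connected]) (auto simp: N_def)
  then have "card V \<le> 1"
    using card_mono[of "{v}" V] by simp
  with card_V_gt m_ge_4 show False by simp
qed

lemma ex_distance_two:
  assumes "v \<in> V" "\<not> V \<subseteq> insert v (N v)"
  obtains c q where "E v c" "E c q" "q \<noteq> v" "\<not> E v q"
proof -
  have "\<not> (\<forall>p\<in>insert v (N v). \<forall>q. E p q \<longrightarrow> q \<in> insert v (N v))"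
    using assms connected_graph_subset_if_closed[OF connected, of v "insert v (N v)"] by blast
  then show thesis
    using that by auto
qed

lemma hub_bound:
  assumes X: "X \<subseteq> V" "c \<in> V" "c \<notin> X" and Q: "Q \<subseteq> {1..<m}"
    and hub: "\<forall>x\<in>X. E x c \<and> Q \<subseteq> \<rho> ` (N x - X - {c})"
  shows "card Q + card X < m"
proof -
  define \<rho>' where "\<rho>' h = (if \<rho> h \<in> Q then \<rho> h else 0)" for h
  have "\<rho>' h < m" for h
    using Q m_ge_4 by (auto simp: \<rho>'_def)
  moreover have "\<forall>x\<in>X. E x c \<and> Q \<subseteq> \<rho>' ` (N x - X - {c})"
    using hub by (force simp: \<rho>'_def image_iff)
  ultimately have "card V \<le> card (hub_set Q c X \<rho>')"
    using X Q by (intro card_V_le_dominating dominating_hub_set)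
  also have "\<dots> = (m - card Q) + (card V - card X - 1)"
    using X Q by (intro card_hub_set) auto
  finally have "card V \<le> (m - card Q) + (card V - card X - 1)" .
  moreover have "card X < card V"
    using X finite_V by (intro psubset_card_mono) auto
  moreover have "card Q < m"
    using Q card_mono[OF _ Q] m_ge_4 by simp
  ultimately show ?thesis by linarith
qed

lemma common_neighbours_bound:
  assumes "X \<subseteq> V" "X \<noteq> {}" "C \<noteq> {}" "C \<inter> X = {}" "\<forall>x\<in>X. C \<subseteq> N x"
  shows "card C + card X \<le> m"
proof (rule ccontr)
  assume "\<not> card C + card X \<le> m"
  obtain c where c: "c \<in> C"
    using assms(3) by blast
  have "C \<subseteq> V"
    using assms(2,5) N_subset_V by blast
  then have "finite C"
    using finite_V by (rule finite_subset)
  with c \<open>\<not> card C + card X \<le> m\<close> have "card {card X..<m} \<le> card (C - {c})"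
    by (simp add: card_Diff_singleton)
  then obtain \<rho> :: "_ \<Rightarrow> nat" where \<rho>: "{card X..<m} \<subseteq> \<rho> ` (C - {c})"
    using ex_common_image_superset[of "{card X..<m}" "C - {c}" "C - {c}"] \<open>finite C\<close> by auto
  have "0 < card X"
    using assms(1,2) finite_V by (simp add: card_gt_0_iff finite_subset)
  moreover have "\<forall>x\<in>X. E x c \<and> {card X..<m} \<subseteq> \<rho> ` (N x - X - {c})"
  proof
    fix x assume "x \<in> X"
    then have "C - {c} \<subseteq> N x - X - {c}" "c \<in> N x"
      using assms(4,5) c by blast+
    with \<rho> show "E x c \<and> {card X..<m} \<subseteq> \<rho> ` (N x - X - {c})"
      by (meson image_mono subset_trans mem_N)
  qed
  ultimately have "card {card X..<m} + card X < m"
    using assms(1,4) c \<open>C \<subseteq> V\<close> by (intro hub_bound) auto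
  then show False by simp
qed

lemma degree_le:
  assumes "a \<in> V"
  shows "card (N a) \<le> m - 1"
  using common_neighbours_bound[of "{a}" "N a"] N_nonempty[OF assms] assms by simp

lemma degree_ge:
  assumes "a \<in> V"
  shows "m - 2 \<le> card (N a)"
proof -
  define B where "B = V - insert a (N a)"
  define D where "D = ({..<m} \<times> {a}) \<union> ({0} \<times> B)"
  obtain e where e: "E a e"
    using N_nonempty[OF assms] by auto
  have "dominating_set PV PE D"
    unfolding D_def B_def using assms m_ge_4 by (intro dominating_row_and_layer) auto
  moreover have "finite D"
    using finite_V by (simp add: D_def B_def)
  ultimately obtain S where S: "S \<subseteq> D" "minimal_dominating_set PV PE S"
    using dominating_set_contains_minimal by blast
  then have dom_S: "dominating_set PV PE S"
    by (simp add: minimal_dominating_set_def)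
  \<comment> \<open>(j, e) and (1, h) are private neighbours of (j, a) and (0, h) with respect to D.\<close>
  have "(j, a) \<in> S" if "1 \<le> j" "j < m" for j
    using that e E_in_V[OF e]
    by (intro private_neighbour_mem[OF dom_S S(1), of "(j, e)"]) (auto simp: D_def B_def)
  moreover have "(0, h) \<in> S" if "h \<in> B" for h
    using that m_ge_4 E_sym
    by (intro private_neighbour_mem[OF dom_S S(1), of "(1, h)"]) (auto simp: D_def B_def)
  ultimately have "({1..<m} \<times> {a}) \<union> ({0} \<times> B) \<subseteq> S" by auto
  then have "card (({1..<m} \<times> {a}) \<union> ({0} \<times> B)) \<le> card V"
    using card_mono[OF finite_subset[OF S(1) \<open>finite D\<close>]] card_minimal_dominating_le[OF S(2)]
    by (meson le_trans)
  moreover have "card (({1..<m} \<times> {a}) \<union> ({0} \<times> B)) = (m - 1) + card B"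
    using finite_V by (subst card_Un_disjoint) (auto simp: card_cartesian_product_singleton B_def)
  moreover have "card B + card (N a) + 1 = card V"
  proof -
    have "insert a (N a) \<subseteq> V" "a \<notin> N a" using assms N_subset_V by auto
    then show ?thesis
      using finite_V card_mono[of V "insert a (N a)"]
      by (simp add: B_def card_Diff_subset)
  qed
  ultimately show ?thesis by linarith
qed

lemma degree_cases: "v \<in> V \<Longrightarrow> card (N v) = m - 2 \<or> card (N v) = m - 1"
  using degree_le[of v] degree_ge[of v] m_ge_4 by linarith

lemma ex_dominator:
  assumes "u \<in> V" "card (N u) = m - 2"
  shows "\<exists>b. dominates b u"
proof (rule ccontr)
  assume "\<nexists>b. dominates b u"
  moreover obtain w where w: "E u w"
    using N_nonempty[OF assms(1)] by auto
  moreover obtain g where "bij_betw g (N u - {w}) {3..<m}"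
  proof -
    have "card (N u - {w}) = card {3..<m}"
      using w assms(2) by (simp add: card_Diff_singleton)
    then show thesis
      using that finite_same_card_bij[of "N u - {w}" "{3..<m}"] by auto
  qed
  ultimately have "minimal_dominating_set PV PE
      (hub_set {3..<m} w {u} (\<lambda>h. if h \<in> N u - {w} then g h else 0))"
    (is "minimal_dominating_set PV PE ?D")
    using m_ge_4 by (intro minimal_dominating_hub_set_if_undominated) auto
  then have "card ?D \<le> card V"
    by (rule card_minimal_dominating_le)
  moreover have "card ?D = 3 + (card V - 2)"
    using w E_in_V m_ge_4 by (subst card_hub_set) auto
  ultimately show False
    using card_V_gt m_ge_4 by linarith
qed

lemma no_common_neighbour_full_degree:
  assumes "u1 \<in> V" "u2 \<in> V" "card (N u1) = m - 1" "card (N u2) = m - 1"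
    and "u1 \<noteq> u2" "\<not> E u1 u2" "E u1 c"
  shows "\<not> E u2 c"
proof
  assume "E u2 c"
  have "card {2..<m} \<le> card (N u1 - {c})" "card {2..<m} \<le> card (N u2 - {c})"
    using assms(3,4,7) \<open>E u2 c\<close> by (simp_all add: card_Diff_singleton)
  then obtain \<rho> :: "_ \<Rightarrow> nat"
    where "{2..<m} \<subseteq> \<rho> ` (N u1 - {c})" "{2..<m} \<subseteq> \<rho> ` (N u2 - {c})"
    using ex_common_image_superset[of "{2..<m}" "N u1 - {c}" "N u2 - {c}"] by auto
  moreover have "N u1 - {u1, u2} - {c} = N u1 - {c}" "N u2 - {u1, u2} - {c} = N u2 - {c}"
    using assms(6) E_commute by auto
  ultimately have "card {2..<m} + card {u1, u2} < m"
    using assms \<open>E u2 c\<close> E_in_V by (intro hub_bound[of "{u1, u2}" c]) auto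
  with assms(5) show False by simp
qed

lemma card_N_diff_dominator_lt:
  assumes "u \<in> V" "card (N u) = m - 2" "dominates b u"
    and "E u w" "E w z" "z \<noteq> u" "\<not> E u z" "z \<noteq> b"
  shows "card (N z - {b}) < m - 2"
proof (rule ccontr)
  assume "\<not> card (N z - {b}) < m - 2"
  moreover have "w \<in> N z - {b}"
    using assms(3,4,5) E_commute by (auto simp: dominates_def)
  ultimately have "card {3..<m} \<le> card (N u - {w})" "card {3..<m} \<le> card (N z - {b} - {w})"
    using assms(2,4) by (simp_all add: card_Diff_singleton)
  then obtain \<rho> :: "_ \<Rightarrow> nat"
    where \<rho>: "{3..<m} \<subseteq> \<rho> ` (N u - {w})" "{3..<m} \<subseteq> \<rho> ` (N z - {b} - {w})"
    using ex_common_image_superset[of "{3..<m}" "N u - {w}" "N z - {b} - {w}"] by auto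
  \<comment> \<open>Since N u \<subseteq> N b, the neighbours of u serve both u and b.\<close>
  have "N u - {w} \<subseteq> N x - {u, b, z} - {w}" if "x \<in> {u, b}" for x
    using that assms(3,7) by (auto simp: dominates_def)
  then have cover_ub: "{3..<m} \<subseteq> \<rho> ` (N x - {u, b, z} - {w})" if "x \<in> {u, b}" for x
    using \<rho>(1) image_mono that by (meson subset_trans)
  have "N z - {b} - {w} \<subseteq> N z - {u, b, z} - {w}"
    using assms(7) E_commute by auto
  then have cover_z: "{3..<m} \<subseteq> \<rho> ` (N z - {u, b, z} - {w})"
    using \<rho>(2) image_mono by (meson subset_trans)
  have "E x w" if "x \<in> {u, b, z}" for x
    using that assms(3,4,5) E_commute by (auto simp: dominates_def)
  with cover_ub cover_z have "\<forall>x\<in>{u, b, z}. E x w \<and> {3..<m} \<subseteq> \<rho> ` (N x - {u, b, z} - {w})"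
    by blast
  then have "card {3..<m} + card {u, b, z} < m"
    using assms E_in_V by (intro hub_bound) (auto simp: dominates_def)
  moreover have "card {u, b, z} = 3"
    using assms(3,6,8) by (auto simp: dominates_def)
  ultimately show False
    using m_ge_4 by simp
qed

lemma dominator_path_neighbour:
  assumes "u \<in> V" "card (N u) = m - 2" "dominates b u"
    and "E u w" "E w z" "z \<noteq> u" "\<not> E u z" "z \<noteq> b"
  shows "E z b \<and> card (N z) = m - 2"
proof -
  have lt: "card (N z - {b}) < m - 2"
    using card_N_diff_dominator_lt[OF assms] .
  have z: "z \<in> V" using assms(5) E_in_V by blast
  have "E z b"
  proof (rule ccontr)
    assume "\<not> E z b"
    then have "N z - {b} = N z" by auto
    with lt degree_ge[OF z] show False by simp
  qed
  moreover from this have "card (N z - {b}) = card (N z) - 1"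
    by (simp add: card_Diff_singleton)
  ultimately show ?thesis
    using lt degree_cases[OF z] m_ge_4 by linarith
qed

lemma ex_degree_m_minus_2: "\<exists>u\<in>V. card (N u) = m - 2"
proof (rule ccontr)
  assume "\<not> ?thesis"
  then have full: "card (N v) = m - 1" if "v \<in> V" for v
    using degree_cases that by blast
  obtain v where v: "v \<in> V"
    using connected by (auto simp: connected_graph_def)
  have "card (insert v (N v)) < card V"
    using full[OF v] card_V_gt m_ge_4 by simp
  then have "\<not> V \<subseteq> insert v (N v)"
    by (meson card_mono finite_N finite_insert not_le)
  then obtain c q where "E v c" "E c q" "q \<noteq> v" "\<not> E v q"
    using ex_distance_two[OF v] by blast
  moreover have "q \<in> V" using \<open>E c q\<close> E_in_V by blast
  ultimately have "\<not> E q c"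
    using no_common_neighbour_full_degree[OF v _ full[OF v] full] by blast
  with \<open>E c q\<close> show False
    using E_sym by blast
qed

lemma dominator_degree_ne_m_minus_2:
  assumes u: "u \<in> V" "card (N u) = m - 2" and b: "dominates b u"
  shows "card (N b) \<noteq> m - 2"
proof
  assume "card (N b) = m - 2"
  with b u have N_eq: "N u = N b"
    by (intro card_subset_eq) (auto simp: dominates_def)
  then have adj_eq: "E b y \<longleftrightarrow> E u y" for y
    by (metis mem_N)
  \<comment> \<open>Every vertex at distance two from u is adjacent to b, hence to u: the component is tiny.\<close>
  have "\<forall>v\<in>{u, b} \<union> N u. \<forall>y. E v y \<longrightarrow> y \<in> {u, b} \<union> N u"
  proof (intro ballI allI impI)
    fix v y assume "v \<in> {u, b} \<union> N u" "E v y"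
    then consider "v = u" | "v = b" | "E u v" by auto
    then show "y \<in> {u, b} \<union> N u"
    proof cases
      case 3
      with \<open>E v y\<close> show ?thesis
        using adj_eq dominator_path_neighbour[OF u b, of v y] E_commute by auto
    qed (use adj_eq \<open>E v y\<close> in auto)
  qed
  then have "V \<subseteq> {u, b} \<union> N u"
    using u by (intro connected_graph_subset_if_closed[OF connected]) auto
  then have "card V \<le> card ({u, b} \<union> N u)"
    by (intro card_mono) auto
  also have "\<dots> \<le> card {u, b} + card (N u)"
    by (rule card_Un_le)
  finally show False
    using card_V_gt m_ge_4 u(2) card_insert_le_m1[of 2 "{b}" u] by simp
qed

context
  fixes u b x
  assumes u: "u \<in> V" "card (N u) = m - 2" and b: "dominates b u"
    and N_b: "N b = insert x (N u)" and x: "x \<notin> N u"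
begin

lemma E_b_iff: "E b y \<longleftrightarrow> y = x \<or> E u y"
  using N_b by (metis insert_iff mem_N)

lemma extra_neighbour_x: "E b x" "x \<noteq> u" "x \<noteq> b" "\<not> E u x" "x \<in> V"
proof -
  show "E b x"
    by (simp add: E_b_iff)
  then show "x \<noteq> b" "x \<in> V" "x \<noteq> u"
    using E_in_V b E_sym by (auto simp: dominates_def)
  show "\<not> E u x"
    using x by simp
qed

lemma card_N_b: "card (N b) = m - 1"
  using N_b x u(2) m_ge_4 by simp

lemma second_neighbourhood:
  assumes "E u w" "E w y"
  shows "y \<in> {u, b, x} \<union> N u"
proof (rule ccontr)
  assume "y \<notin> {u, b, x} \<union> N u"
  then have "E b y"
    using dominator_path_neighbour[OF u b assms] E_commute by auto
  with \<open>y \<notin> {u, b, x} \<union> N u\<close> show False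
    by (simp add: E_b_iff)
qed

lemma ex_common_neighbour: "\<exists>w. E u w \<and> E w x"
proof (rule ccontr)
  assume no_common: "\<nexists>w. E u w \<and> E w x"
  have "card (N x - {b}) \<noteq> 0"
    using degree_ge[OF extra_neighbour_x(5)] m_ge_4 card_Diff_singleton_if[of "N x" b] by auto
  then obtain y where "y \<in> N x - {b}"
    by (metis card.empty ex_in_conv)
  then have y: "E x y" "y \<noteq> b"
    by auto
  have "y \<in> V" "y \<noteq> u" "y \<noteq> x" "\<not> E u y"
    using y extra_neighbour_x no_common E_in_V E_sym by auto
  then have "\<not> E b y"
    using y(1) by (simp add: E_b_iff)
  have card_N_y: "card (N y) = m - 2"
    using degree_cases[OF \<open>y \<in> V\<close>] no_common_neighbour_full_degree[of b y x] card_N_b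
      b y extra_neighbour_x \<open>\<not> E b y\<close> \<open>y \<in> V\<close> E_commute by (auto simp: dominates_def)
  then obtain b' where b': "dominates b' y"
    using ex_dominator \<open>y \<in> V\<close> by blast
  \<comment> \<open>Otherwise b would have degree m - 2, being at distance two from y through x.\<close>
  have "b' = b"
  proof (rule ccontr)
    assume "b' \<noteq> b"
    then have "card (N b) = m - 2"
      using dominator_path_neighbour[OF \<open>y \<in> V\<close> card_N_y b', of x b]
        y extra_neighbour_x \<open>\<not> E b y\<close> E_commute by auto
    with card_N_b m_ge_4 show False by simp
  qed
  have "N y \<subseteq> {x}"
  proof
    fix t assume "t \<in> N y"
    then have "t \<in> insert x (N u)"
      using b' \<open>b' = b\<close> N_b by (auto simp: dominates_def)
    moreover have "t \<notin> N u"
      using second_neighbourhood[of t y] \<open>t \<in> N y\<close> \<open>y \<noteq> u\<close> \<open>y \<noteq> x\<close> y(2) \<open>\<not> E u y\<close>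
      by (auto simp: E_commute)
    ultimately show "t \<in> {x}" by simp
  qed
  then have "card (N y) \<le> 1"
    using card_mono[of "{x}" "N y"] by simp
  with card_N_y m_ge_4 show False by simp
qed

lemma card_N_x: "card (N x) = m - 2"
  using ex_common_neighbour dominator_path_neighbour[OF u b] extra_neighbour_x by blast

lemma N_x_eq_if_dominates:
  assumes bx: "dominates bx x"
  shows "E u bx" "N x = insert b (N u - {bx})"
proof -
  obtain w where w: "E u w" "E w x"
    using ex_common_neighbour by blast
  have "bx \<noteq> u"
    using bx E_sym[OF extra_neighbour_x(1)] b by (auto simp: dominates_def)
  then show "E u bx"
    using dominator_path_neighbour[OF extra_neighbour_x(5) card_N_x bx, of w u] w extra_neighbour_x E_commute
    by auto
  have "N x \<subseteq> insert b (N u - {bx})"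
  proof
    fix t assume "t \<in> N x"
    then have "E bx t"
      using bx by (auto simp: dominates_def)
    then have "t \<in> {u, b, x} \<union> N u"
      by (rule second_neighbourhood[OF \<open>E u bx\<close>])
    then show "t \<in> insert b (N u - {bx})"
      using \<open>t \<in> N x\<close> bx extra_neighbour_x by (auto simp: dominates_def E_commute)
  qed
  moreover have "card (insert b (N u - {bx})) = card (N x)"
    using \<open>E u bx\<close> b u(2) card_N_x m_ge_4 by (simp add: dominates_def card_Diff_singleton)
  ultimately show "N x = insert b (N u - {bx})"
    by (intro card_seteq) auto
qed

lemma no_extra_neighbour: False
proof -
  obtain bx where bx: "dominates bx x"
    using ex_dominator[OF extra_neighbour_x(5) card_N_x] by blast
  note N_x = N_x_eq_if_dominates[OF bx]
  have dom_facts: "b \<in> V" "b \<noteq> u" "\<not> E u b" "N u \<subseteq> N b" "bx \<in> V" "bx \<noteq> x" "N x \<subseteq> N bx"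
    using b bx by (simp_all add: dominates_def)
  have "card (N u - {bx}) = m - 3"
    using N_x(1) u(2) by (simp add: card_Diff_singleton)
  moreover have "card (N u - {bx}) + card {u, b, x, bx} \<le> m"
  proof (rule common_neighbours_bound)
    show "N u - {bx} \<noteq> {}"
    proof
      assume "N u - {bx} = {}"
      then have "card (N u - {bx}) = 0"
        by (simp only: card.empty)
      with \<open>card (N u - {bx}) = m - 3\<close> m_ge_4 show False
        by simp
    qed
    show "\<forall>y\<in>{u, b, x, bx}. N u - {bx} \<subseteq> N y"
      using N_x(2) dom_facts by blast
  qed (use u x extra_neighbour_x dom_facts in auto)
  moreover have "card {u, b, x, bx} = 4"
  proof -
    have "u \<noteq> bx" "b \<noteq> bx"
      using N_x(1) dom_facts by auto
    then show ?thesis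
      using extra_neighbour_x dom_facts by simp
  qed
  ultimately show False
    using m_ge_4 by simp
qed

end

lemma dominator_degree_ne_m_minus_1:
  assumes "u \<in> V" "card (N u) = m - 2" "dominates b u"
  shows "card (N b) \<noteq> m - 1"
proof
  assume "card (N b) = m - 1"
  moreover have "N u \<subseteq> N b"
    using assms(3) by (simp add: dominates_def)
  ultimately have "card (N b - N u) = 1"
    using assms(2) m_ge_4 by (simp add: card_Diff_subset)
  then obtain x where "N b - N u = {x}"
    by (rule card_1_singletonE)
  with \<open>N u \<subseteq> N b\<close> have "N b = insert x (N u)" "x \<notin> N u"
    by auto
  with assms show False
    by (rule no_extra_neighbour)
qed

lemma inconsistent: False
proof -
  obtain u where u: "u \<in> V" "card (N u) = m - 2"
    using ex_degree_m_minus_2 by blast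
  then obtain b where b: "dominates b u"
    using ex_dominator by blast
  then have "b \<in> V"
    by (simp add: dominates_def)
  then show False
    using degree_cases dominator_degree_ne_m_minus_2[OF u b] dominator_degree_ne_m_minus_1[OF u b]
    by blast
qed

end

theorem proposition24:
  fixes m :: nat and V :: "'b set" and E :: "'b \<Rightarrow> 'b \<Rightarrow> bool"
  assumes "m \<ge> 4"
    and "simple_graph V E"
    and "connected_graph V E"
    and "card V > m"
  shows "\<not> well_dominated (complete_vertices m \<times> V)
                           (cart_prod_edges (complete_edges m) E)"
proof
  assume "well_dominated (complete_vertices m \<times> V) (cart_prod_edges (complete_edges m) E)"
  with assms interpret well_dominated_Km_product m V E
    by unfold_locales auto
  show False
    by (rule inconsistent)
qed

end
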